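(* Fix $\mu\in(-1,1)$ and let $u^\xi\in\mathcal M_\mu$. The matrix $S=(S_{kj})_{k,j=1}^N$, $S_{kj}=\langle u^\xi_k,u^\xi_j\rangle$, is invertible with $$S^{-1}_{kj}=\frac{\varepsilon}{\mathcal X}\Big[\delta_{kj}+\frac{1}{N+1}(-1)^{k+j+1}\Big]+\mathcal O(\exp).$$
   Context: $0<\varepsilon\ll1$; $f(u)=u^3-u$; $\langle\cdot,\cdot\rangle$ inner product of $L^2(0,1)$. $U(x)=\tanh(x/\sqrt2)$; $U(x;\xi,\pm1)=\pm U((x-\xi)/\varepsilon)$; $\mathcal X=\int_{\mathbb R}U'(y)^2dy$. Fix an integer $N\ge1$, small $\kappa_0>0$, $\rho_\varepsilon=\varepsilon^{\kappa_0}$. $\Omega_{\rho_\varepsilon}=\{h\in\mathbb R^{N+1}:0<h_1<\dots<h_{N+1}<1,\ \min_{j=0,\dots,N+1}|h_{j+1}-h_j|>\varepsilon/\rho_\varepsilon\}$ with $h_0=-h_1$, $h_{N+2}=2-h_{N+1}$. For $h\in\Omega_{\rho_\varepsilon}$, $u^h=\sum_{j=1}^{N+1}U(\cdot;h_j,(-1)^{j+1})+\beta_N$, where $\beta_N=\frac{(-1)^N-1}{2}+\mathcal O(\exp)$ (also for derivatives) makes $u^h(0)=-1$ and $u^h$ satisfy Neumann boundary conditions; $\mathcal O(\exp)$ means exponentially small in $\varepsilon$. $\mathcal M=\{u^h:h\in\Omega_{\rho_\varepsilon}\}$, $\mathcal M_\mu=\{u^h\in\mathcal M:\int_0^1u^h=\mu\}$.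 There is a smooth map $h_{N+1}:[0,1]^N\to\mathbb R$ such that $u^h\in\mathcal M_\mu$ iff $h=(\xi,h_{N+1}(\xi))\in\Omega_{\rho_\varepsilon}$, $\xi=(h_1,\dots,h_N)$, and $\partial h_{N+1}/\partial h_i=(-1)^{N-i}+\mathcal O(\exp)$. $u^\xi=u^{(\xi,h_{N+1}(\xi))}$, $u^\xi_k=\partial_{\xi_k}u^\xi$. *)

theory Defs
  imports "HOL-Analysis.Analysis" "Jordan_Normal_Form.Matrix"
begin

text \<open>Parameters: eps (the small parameter),
  ka0 (the exponent kappa_0), N (number of interior layers minus one).
  Points h of R^(N+1) are represented as functions nat => real, only the
  entries h 1, ..., h (N+1) being relevant; xi in R^N likewise uses xi 1..xi N.\<close>

definition U :: "real \<Rightarrow> real" where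
  "U x = tanh (x / sqrt 2)"

definition Ushift :: "real \<Rightarrow> real \<Rightarrow> real \<Rightarrow> real \<Rightarrow> real" where
  "Ushift eps xi s x = s * U ((x - xi) / eps)"

definition chiX :: real where
  "chiX = integral UNIV (\<lambda>y. (deriv U y)\<^sup>2)"

definition rho :: "real \<Rightarrow> real \<Rightarrow> real" where
  "rho ka0 eps = eps powr ka0"

definition L2inner :: "(real \<Rightarrow> real) \<Rightarrow> (real \<Rightarrow> real) \<Rightarrow> real" where
  "L2inner f g = integral {0..1} (\<lambda>x. f x * g x)"

definition hext :: "nat \<Rightarrow> (nat \<Rightarrow> real) \<Rightarrow> nat \<Rightarrow> real" where
  "hext N h j = (if j = 0 then - h 1 else if j = N + 2 then 2 - h (N + 1) else h j)"

definition Omega :: "nat \<Rightarrow> real \<Rightarrow> real \<Rightarrow> (nat \<Rightarrow> real) set" where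
  "Omega N ka0 eps = {h. 0 < h 1 \<and> (\<forall>j\<in>{1..N}. h j < h (j + 1)) \<and> h (N + 1) < 1 \<and>
      (\<forall>j\<in>{0..N+1}. hext N h (j + 1) - hext N h j > eps / rho ka0 eps)}"

text \<open>Exponentially small bound: a quantity is O(exp) if it is bounded by
  K * exp(-c / rho_eps) = K * exp(-c * eps powr (-ka0)) for constants K, c > 0.\<close>
definition expbound :: "real \<Rightarrow> real \<Rightarrow> real \<Rightarrow> real \<Rightarrow> real" where
  "expbound ka0 K c eps = K * exp (- c / rho ka0 eps)"

text \<open>u^h = sum_{j=1}^{N+1} U(.; h_j, (-1)^(j+1)) + beta_N, where the correction
  beta_N = beta eps h x is a parameter of the construction.\<close>
definition uh :: "nat \<Rightarrow> (real \<Rightarrow> (nat \<Rightarrow> real) \<Rightarrow> real \<Rightarrow> real) \<Rightarrow> real \<Rightarrow> (nat \<Rightarrow> real) \<Rightarrow> real \<Rightarrow> real" where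
  "uh N beta eps h x = (\<Sum>j = 1..N+1. Ushift eps (h j) ((-1) ^ (j + 1)) x) + beta eps h x"

definition hxi :: "nat \<Rightarrow> (real \<Rightarrow> (nat \<Rightarrow> real) \<Rightarrow> real) \<Rightarrow> real \<Rightarrow> (nat \<Rightarrow> real) \<Rightarrow> nat \<Rightarrow> real" where
  "hxi N hN1 eps xi = xi(N + 1 := hN1 eps xi)"

definition uxi :: "nat \<Rightarrow> (real \<Rightarrow> (nat \<Rightarrow> real) \<Rightarrow> real \<Rightarrow> real) \<Rightarrow> (real \<Rightarrow> (nat \<Rightarrow> real) \<Rightarrow> real) \<Rightarrow> real \<Rightarrow> (nat \<Rightarrow> real) \<Rightarrow> real \<Rightarrow> real" where
  "uxi N beta hN1 eps xi = uh N beta eps (hxi N hN1 eps xi)"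

definition uxi_k :: "nat \<Rightarrow> (real \<Rightarrow> (nat \<Rightarrow> real) \<Rightarrow> real \<Rightarrow> real) \<Rightarrow> (real \<Rightarrow> (nat \<Rightarrow> real) \<Rightarrow> real) \<Rightarrow> real \<Rightarrow> (nat \<Rightarrow> real) \<Rightarrow> nat \<Rightarrow> real \<Rightarrow> real" where
  "uxi_k N beta hN1 eps xi k x = deriv (\<lambda>t. uxi N beta hN1 eps (xi(k := t)) x) (xi k)"

text \<open>The N x N matrix S_{kj} = <u^xi_k, u^xi_j>, indices k,j = 1..N stored at 0..N-1.\<close>
definition Smat :: "nat \<Rightarrow> (real \<Rightarrow> (nat \<Rightarrow> real) \<Rightarrow> real \<Rightarrow> real) \<Rightarrow> (real \<Rightarrow> (nat \<Rightarrow> real) \<Rightarrow> real) \<Rightarrow> real \<Rightarrow> (nat \<Rightarrow> real) \<Rightarrow> real mat" where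
  "Smat N beta hN1 eps xi =
     mat N N (\<lambda>(k, j). L2inner (uxi_k N beta hN1 eps xi (k + 1)) (uxi_k N beta hN1 eps xi (j + 1)))"

end

theory Submission
  imports Defs "Jordan_Normal_Form.Determinant" "HOL-Real_Asymp.Real_Asymp"
begin

(* Moving xi_k shifts layer k at unit speed and, through the mass constraint, layer N + 1 at
   speed (-1)^(N-k) + O(exp); so up to O(exp) the tangent vector u^xi_k is
   (-1)^k / eps * (U'((x - xi_k)/eps) - U'((x - h_(N+1))/eps)).  Layers are eps/rho_eps apart,
   hence products of profiles centred at different layers integrate to O(exp), while each square
   integrates to eps * chiX + O(exp).  Therefore S = (chiX/eps) (A + O(exp)) with
   A_kj = (-1)^(k+j) (delta_kj + 1), whose inverse is (-1)^(k+j) (delta_kj - 1/(N+1)), and a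
   perturbation bound in the maximum norm gives the invertibility of S and the expansion of S^-1. *)

unbundle no vec_syntax

section \<open>The profile U\<close>

definition U' :: "real \<Rightarrow> real" where
  "U' y = (1 - (U y)\<^sup>2) / sqrt 2"

lemma has_real_derivative_U: "(U has_real_derivative U' y) (at y)"
proof -
  have "((\<lambda>x. tanh (x / sqrt 2)) has_real_derivative (1 - (tanh (y / sqrt 2))\<^sup>2) * (1 / sqrt 2)) (at y)"
    by (rule has_field_derivative_tanh[OF _ DERIV_cdivide[OF DERIV_ident]]) simp
  then show ?thesis
    by (simp add: U_def[abs_def] U'_def)
qed

lemma deriv_U: "deriv U = U'"
  using has_real_derivative_U DERIV_imp_deriv by blast

lemma isCont_U': "isCont U' y"
proof -
  have "isCont U y" using has_real_derivative_U DERIV_isCont by blast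
  then show ?thesis unfolding U'_def[abs_def] by (intro continuous_intros) auto
qed

lemma continuous_on_U'_rescaled: "continuous_on S (\<lambda>x. U' ((x - a) / e))"
proof -
  have "continuous_on UNIV U'"
    by (simp add: continuous_at_imp_continuous_on isCont_U')
  moreover have "continuous_on S (\<lambda>x. (x - a) / e)"
    by (cases "e = 0") (auto intro!: continuous_intros)
  ultimately show ?thesis
    by (rule continuous_on_compose2) auto
qed

lemma abs_U_less_1: "\<bar>U y\<bar> < 1"
  unfolding U_def using tanh_real_bounds by (simp add: abs_less_iff)

lemma U_minus: "U (- y) = - U y"
  by (simp add: U_def)

lemma U'_nonneg: "0 \<le> U' y"
  using abs_U_less_1[of y] by (simp add: U'_def abs_square_le_1 less_imp_le)

lemma U'_le_one_minus_U_sq: "U' y \<le> 1 - (U y)\<^sup>2"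
proof -
  have "0 \<le> 1 - (U y)\<^sup>2" using abs_U_less_1[of y] by (simp add: abs_square_le_1 less_imp_le)
  then show ?thesis
    unfolding U'_def by (simp add: divide_le_eq mult_le_cancel_left1)
qed

lemma U'_le_1: "U' y \<le> 1"
  using U'_le_one_minus_U_sq[of y] by (smt (verit) zero_le_power2)

lemma one_minus_tanh_sq_le: "1 - (tanh w)\<^sup>2 \<le> 4 * exp (- 2 * \<bar>w :: real\<bar>)"
proof -
  define e where "e = exp (- 2 * \<bar>w\<bar>)"
  have e: "0 < e" by (simp add: e_def)
  have "(tanh w)\<^sup>2 = (tanh \<bar>w\<bar>)\<^sup>2"
    by (cases "0 \<le> w") simp_all
  also have "tanh \<bar>w\<bar> = (1 - e) / (1 + e)"
    by (simp add: tanh_real_altdef e_def)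
  finally have "1 - (tanh w)\<^sup>2 = 4 * e / (1 + e)\<^sup>2"
    using e by (auto simp: field_split_simps power2_eq_square) (smt (verit) mult_pos_pos)
  also have "\<dots> \<le> 4 * e"
    using e by (simp add: divide_le_eq)
  finally show ?thesis by (simp add: e_def)
qed

lemma U'_exp_decay: "U' y \<le> 4 * exp (- \<bar>y\<bar>)"
proof -
  have "2 * \<bar>y / sqrt 2\<bar> = sqrt 2 * \<bar>y\<bar>"
    by (simp add: abs_div real_div_sqrt flip: times_divide_eq_left)
  then have "exp (- 2 * \<bar>y / sqrt 2\<bar>) \<le> exp (- \<bar>y\<bar>)"
    by (simp add: mult_le_cancel_right1)
  then show ?thesis
    using U'_le_one_minus_U_sq[of y] one_minus_tanh_sq_le[of "y / sqrt 2"]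
    unfolding U_def by linarith
qed

(* As U' = (1 - U^2) / sqrt 2, the derivative of (U - U^3/3) / sqrt 2 is U' (1 - U^2) / sqrt 2 = U'^2. *)
definition U'_sq_primitive :: "real \<Rightarrow> real" where
  "U'_sq_primitive y = (U y - (U y)^3 / 3) / sqrt 2"

lemma has_real_derivative_U'_sq_primitive: "(U'_sq_primitive has_real_derivative (U' y)\<^sup>2) (at y)"
proof -
  have "((\<lambda>y. (U y)^3) has_real_derivative 3 * (U' y * (U y)\<^sup>2)) (at y)"
    using DERIV_power[OF has_real_derivative_U, of 3] by (simp add: numeral_eq_Suc)
  then have "(U'_sq_primitive has_real_derivative (U' y - 3 * (U' y * (U y)\<^sup>2) / 3) / sqrt 2) (at y)"
    unfolding U'_sq_primitive_def[abs_def] by (intro DERIV_cdivide DERIV_diff has_real_derivative_U)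
  also have "(U' y - 3 * (U' y * (U y)\<^sup>2) / 3) / sqrt 2 = (U' y)\<^sup>2"
    by (simp add: U'_def power2_eq_square field_simps)
  finally show ?thesis .
qed

lemma U'_sq_primitive_minus: "U'_sq_primitive (- y) = - U'_sq_primitive y"
  by (simp add: U'_sq_primitive_def U_minus field_simps)

lemma U_at_top: "(U \<longlongrightarrow> 1) at_top"
  unfolding U_def[abs_def]
  by (rule filterlim_compose[OF tanh_real_at_top]) real_asymp

lemma U'_sq_primitive_at_top: "(U'_sq_primitive \<longlongrightarrow> sqrt 2 / 3) at_top"
proof -
  have "(U'_sq_primitive \<longlongrightarrow> (1 - 1 ^ 3 / 3) / sqrt 2) at_top"
    unfolding U'_sq_primitive_def[abs_def] by (intro tendsto_intros U_at_top) auto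
  moreover have "(1 - 1 ^ 3 / 3) / sqrt 2 = sqrt 2 / (3 :: real)"
    by (simp add: field_simps)
  ultimately show ?thesis by (simp only:)
qed

lemma U'_sq_primitive_at_bot: "(U'_sq_primitive \<longlongrightarrow> - sqrt 2 / 3) at_bot"
proof -
  have "((\<lambda>y. - U'_sq_primitive y) \<longlongrightarrow> - sqrt 2 / 3) at_top"
    using tendsto_minus[OF U'_sq_primitive_at_top] by simp
  then show ?thesis
    by (simp add: filterlim_at_bot_mirror U'_sq_primitive_minus)
qed

lemma chiX_eq: "chiX = 2 * sqrt 2 / 3"
proof -
  have cont: "isCont (\<lambda>y. (U' y)\<^sup>2) y" for y
    by (intro continuous_intros isCont_U')
  have bot: "((U'_sq_primitive \<circ> real_of_ereal) \<longlongrightarrow> - sqrt 2 / 3) (at_right (-\<infinity>))"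
    unfolding ereal_tendsto_simps by (rule U'_sq_primitive_at_bot)
  have top: "((U'_sq_primitive \<circ> real_of_ereal) \<longlongrightarrow> sqrt 2 / 3) (at_left \<infinity>)"
    unfolding ereal_tendsto_simps by (rule U'_sq_primitive_at_top)
  note FTC = interval_integral_FTC_nonneg[of "-\<infinity>" \<infinity> U'_sq_primitive "\<lambda>y. (U' y)\<^sup>2",
      OF _ has_real_derivative_U'_sq_primitive cont _ bot top]
  have "chiX = (LINT y:UNIV|lborel. (U' y)\<^sup>2)"
    using set_borel_integral_eq_integral(2)[OF FTC(1)]
    by (simp add: chiX_def deriv_U)
  also have "\<dots> = sqrt 2 / 3 - (- sqrt 2 / 3)"
    using FTC(2) by (simp add: interval_lebesgue_integral_def)
  finally show ?thesis by simp
qed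

lemma chiX_pos: "0 < chiX"
  by (simp add: chiX_eq)

lemma U'_sq_primitive_tail:
  assumes "0 \<le> z"
  shows "0 \<le> sqrt 2 / 3 - U'_sq_primitive z" and "sqrt 2 / 3 - U'_sq_primitive z \<le> 4 * exp (- z)"
proof -
  have U: "-1 < U z" "U z < 1" using abs_U_less_1[of z] by auto
  have eq: "sqrt 2 / 3 - U'_sq_primitive z = (1 - U z)\<^sup>2 * ((2 + U z) / (3 * sqrt 2))"
    by (simp add: U'_sq_primitive_def field_simps power2_eq_square power3_eq_cube)
  show "0 \<le> sqrt 2 / 3 - U'_sq_primitive z"
    unfolding eq using U by simp
  have le1: "(2 + U z) / (3 * sqrt 2) \<le> 1"
    using U by (simp add: divide_le_eq) (smt (verit) real_sqrt_ge_one)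
  have "sqrt 2 / 3 - U'_sq_primitive z \<le> (1 - U z)\<^sup>2"
    unfolding eq by (rule mult_left_le[OF le1]) simp
  also have "\<dots> \<le> 2 * (1 - U z)"
    unfolding power2_eq_square using U by (intro mult_right_mono) auto
  also have "1 - U z \<le> 2 * exp (- z)"
  proof -
    define e where "e = exp (- sqrt 2 * z)"
    have e: "0 < e" by (simp add: e_def)
    have "U z = (1 - e) / (1 + e)"
      by (simp add: U_def tanh_real_altdef e_def real_div_sqrt flip: times_divide_eq_left)
    then have "1 - U z = 2 * e / (1 + e)"
      using e by (simp add: field_simps)
    also have "\<dots> \<le> 2 * e"
      using e by (simp add: divide_le_eq)
    also have "e \<le> exp (- z)"
      using assms by (simp add: e_def mult_le_cancel_right1)
    finally show ?thesis by simp
  qed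
  finally show "sqrt 2 / 3 - U'_sq_primitive z \<le> 4 * exp (- z)" by simp
qed

section \<open>Integrals of products of rescaled profiles over [0, 1]\<close>

lemma abs_mult_diff_le: "\<bar>a * c - b * d\<bar> \<le> \<bar>a - b\<bar> * \<bar>c\<bar> + \<bar>b\<bar> * \<bar>c - d\<bar>"
  for a b c d :: "'a :: linordered_idom"
proof -
  have "a * c - b * d = (a - b) * c + b * (c - d)"
    by (simp add: algebra_simps)
  then show ?thesis
    using abs_triangle_ineq[of "(a - b) * c" "b * (c - d)"] by (simp add: abs_mult)
qed

lemma abs_integral_unit_interval_le:
  fixes f :: "real \<Rightarrow> real"
  assumes f: "f integrable_on {0..1}" and bound: "\<And>x. x \<in> {0..1} \<Longrightarrow> \<bar>f x\<bar> \<le> B"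
  shows "\<bar>integral {0..1} f\<bar> \<le> B"
proof -
  have "0 \<le> B" using bound[of 0] by auto
  from has_integral_bound_real[OF this finite.emptyI integrable_integral[OF f]] bound
  show ?thesis by simp
qed

lemma has_integral_U'_sq_rescaled:
  assumes e: "0 < e"
  shows "((\<lambda>x. U' ((x - a) / e) * U' ((x - a) / e)) has_integral
           e * (U'_sq_primitive ((1 - a) / e) - U'_sq_primitive (- a / e))) {0..1}"
proof -
  have "((\<lambda>x. e * U'_sq_primitive ((x - a) / e)) has_real_derivative U' ((x - a) / e) * U' ((x - a) / e))
          (at x within {0..1})" for x
  proof -
    have "((\<lambda>x. U'_sq_primitive ((x - a) / e)) has_real_derivative (U' ((x - a) / e))\<^sup>2 * (1 / e))
            (at x within {0..1})"
      by (rule DERIV_chain2[OF has_real_derivative_U'_sq_primitive]) (use e in \<open>auto intro!: derivative_eq_intros\<close>)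
    from DERIV_cmult[OF this, of e] show ?thesis
      using e by (simp add: power2_eq_square)
  qed
  then have "((\<lambda>x. U' ((x - a) / e) * U' ((x - a) / e)) has_integral
               e * U'_sq_primitive ((1 - a) / e) - e * U'_sq_primitive ((0 - a) / e)) {0..1}"
    by (intro fundamental_theorem_of_calculus) (auto simp flip: has_real_derivative_iff_has_vector_derivative)
  then show ?thesis by (simp add: right_diff_distrib)
qed

lemma integral_U'_sq_rescaled:
  assumes e: "0 < e" and d: "0 \<le> d" "d \<le> a" "d \<le> 1 - a"
  shows "\<bar>integral {0..1} (\<lambda>x. U' ((x - a) / e) * U' ((x - a) / e)) - e * chiX\<bar> \<le> 8 * e * exp (- d / e)"
proof -
  have z: "0 \<le> d / e" "d / e \<le> a / e" "d / e \<le> (1 - a) / e"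
    using e d by (auto intro: divide_right_mono)
  have "exp (- (a / e)) \<le> exp (- d / e)" "exp (- ((1 - a) / e)) \<le> exp (- d / e)"
    using z by auto
  then have tails: "\<bar>U'_sq_primitive ((1 - a) / e) + U'_sq_primitive (a / e) - chiX\<bar> \<le> 8 * exp (- d / e)"
    using U'_sq_primitive_tail[of "a / e"] U'_sq_primitive_tail[of "(1 - a) / e"] z
    unfolding chiX_eq abs_le_iff by linarith
  have "integral {0..1} (\<lambda>x. U' ((x - a) / e) * U' ((x - a) / e)) - e * chiX
          = e * (U'_sq_primitive ((1 - a) / e) + U'_sq_primitive (a / e) - chiX)"
    using integral_unique[OF has_integral_U'_sq_rescaled[OF e, of a]] U'_sq_primitive_minus[of "a / e"]
    by (simp add: algebra_simps)
  also have "\<bar>\<dots>\<bar> \<le> e * (8 * exp (- d / e))"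
    using tails e by (simp add: abs_mult)
  finally show ?thesis by simp
qed

lemma integral_U'_cross_rescaled:
  assumes e: "0 < e" and g: "g \<le> \<bar>a - b\<bar>"
  shows "\<bar>integral {0..1} (\<lambda>x. U' ((x - a) / e) * U' ((x - b) / e))\<bar> \<le> 4 * exp (- g / (2 * e))"
proof (rule abs_integral_unit_interval_le)
  show "(\<lambda>x. U' ((x - a) / e) * U' ((x - b) / e)) integrable_on {0..1}"
    by (intro integrable_continuous_real continuous_intros continuous_on_U'_rescaled)
  fix x :: real
  have far: "U' ((x - c) / e) \<le> 4 * exp (- g / (2 * e))" if "g / 2 \<le> \<bar>x - c\<bar>" for c
  proof -
    have "g / (2 * e) \<le> \<bar>(x - c) / e\<bar>"
      using that e by (simp add: abs_div field_simps)
    then have "exp (- \<bar>(x - c) / e\<bar>) \<le> exp (- g / (2 * e))"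
      by simp
    then show ?thesis
      using U'_exp_decay[of "(x - c) / e"] by linarith
  qed
  have "g / 2 \<le> \<bar>x - a\<bar> \<or> g / 2 \<le> \<bar>x - b\<bar>"
    using g by linarith
  then have "U' ((x - a) / e) * U' ((x - b) / e) \<le> 4 * exp (- g / (2 * e))"
    using far U'_nonneg U'_le_1
    by (meson mult_left_le_one_le mult_right_le_one_le order_trans)
  then show "\<bar>U' ((x - a) / e) * U' ((x - b) / e)\<bar> \<le> 4 * exp (- g / (2 * e))"
    using U'_nonneg by simp
qed

lemma integral_U'_difference_product:
  assumes e: "0 < e" "e \<le> 1" and g: "0 \<le> g"
    and inside: "\<And>c. c \<in> {a, b, n} \<Longrightarrow> g / 2 \<le> c \<and> g / 2 \<le> 1 - c"
    and sep: "g \<le> \<bar>a - n\<bar>" "g \<le> \<bar>b - n\<bar>" "a \<noteq> b \<Longrightarrow> g \<le> \<bar>a - b\<bar>"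
  shows "\<bar>integral {0..1} (\<lambda>x. (U' ((x - a) / e) - U' ((x - n) / e)) * (U' ((x - b) / e) - U' ((x - n) / e)))
           - e * chiX * ((if a = b then 1 else 0) + 1)\<bar> \<le> 24 * exp (- g / (2 * e))"
proof -
  \<comment> \<open>Only the diagonal terms survive: each is e * chiX + O(exp), all cross terms are O(exp).\<close>
  define I where "I c c' = integral {0..1} (\<lambda>x. U' ((x - c) / e) * U' ((x - c') / e))" for c c'
  define th where "th = exp (- g / (2 * e))"
  have diag: "\<bar>I c c - e * chiX\<bar> \<le> 8 * th" if "c \<in> {a, b, n}" for c
  proof -
    have "\<bar>I c c - e * chiX\<bar> \<le> 8 * e * exp (- (g / 2) / e)"
      unfolding I_def using inside[OF that] g by (intro integral_U'_sq_rescaled e) auto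
    also have "\<dots> \<le> 8 * th"
      using e by (simp add: th_def mult_left_le_one_le)
    finally show ?thesis .
  qed
  have cross: "\<bar>I c c'\<bar> \<le> 4 * th" if "g \<le> \<bar>c - c'\<bar>" for c c'
    unfolding I_def th_def using that by (rule integral_U'_cross_rescaled[OF e(1)])
  have I: "((\<lambda>x. U' ((x - c) / e) * U' ((x - c') / e)) has_integral I c c') {0..1}" for c c'
    unfolding I_def
    by (intro integrable_integral integrable_continuous_real continuous_intros continuous_on_U'_rescaled)
  have "((\<lambda>x. (U' ((x - a) / e) - U' ((x - n) / e)) * (U' ((x - b) / e) - U' ((x - n) / e)))
          has_integral I a b - I a n - I n b + I n n) {0..1}"
    using has_integral_add[OF has_integral_diff[OF has_integral_diff[OF I[of a b] I[of a n]] I[of n b]] I[of n n]]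
    by (simp add: algebra_simps)
  then have "integral {0..1} (\<lambda>x. (U' ((x - a) / e) - U' ((x - n) / e)) * (U' ((x - b) / e) - U' ((x - n) / e)))
      = I a b - I a n - I n b + I n n"
    by (rule integral_unique)
  moreover have "\<bar>I a b - I a n - I n b + I n n - e * chiX * ((if a = b then 1 else 0) + 1)\<bar> \<le> 24 * th"
  proof (cases "a = b")
    case True
    then show ?thesis
      using diag[of a] diag[of n] cross[OF sep(1)] cross[of n a] sep(1) by (simp add: abs_minus_commute; linarith)
  next
    case False
    then show ?thesis
      using diag[of n] cross[OF sep(3)[OF False]] cross[OF sep(1)] cross[of n b] sep(2) th_def
      by (simp add: abs_minus_commute; linarith)
  qed
  ultimately show ?thesis by (simp add: th_def)
qed

section \<open>Layer positions\<close>

lemma Omega_less: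
  assumes h: "h \<in> Omega N ka0 eps" and ij: "1 \<le> i" "i < j" "j \<le> N + 1"
  shows "h i < h j"
proof -
  have succ: "h l < h (Suc l)" if "1 \<le> l" "l \<le> N" for l
    using h that unfolding Omega_def by auto
  from ij(2) have "Suc i \<le> j" by simp
  then show ?thesis
    using ij(3)
  proof (induction j rule: dec_induct)
    case base
    then show ?case using succ[of i] ij(1) by simp
  next
    case (step l)
    then show ?case using succ[of l] ij(1) by simp
  qed
qed

lemma Omega_layer_gap:
  assumes h: "h \<in> Omega N ka0 eps" and jl: "1 \<le> j" "j < l" "l \<le> N + 1"
  shows "eps / rho ka0 eps < h l - h j"
proof -
  have "eps / rho ka0 eps < hext N h (j + 1) - hext N h j"
    using h jl unfolding Omega_def by auto
  moreover have "hext N h (j + 1) = h (j + 1)" "hext N h j = h j"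
    using jl by (auto simp: hext_def)
  moreover have "h (j + 1) \<le> h l"
    using Omega_less[OF h, of "j + 1" l] jl by (cases "l = j + 1") auto
  ultimately show ?thesis by simp
qed

lemma Omega_boundary_gap:
  assumes h: "h \<in> Omega N ka0 eps" and j: "1 \<le> j" "j \<le> N + 1"
  shows "eps / rho ka0 eps / 2 < h j" and "eps / rho ka0 eps / 2 < 1 - h j"
proof -
  define g where "g = eps / rho ka0 eps"
  \<comment> \<open>The reflected points h 0 = - h 1 and h (N + 2) = 2 - h (N + 1) encode the distance to the boundary.\<close>
  have "g < hext N h (0 + 1) - hext N h 0" and "g < hext N h (N + 1 + 1) - hext N h (N + 1)"
    using h unfolding Omega_def g_def by auto
  then have "g < 2 * h 1" "g < 2 - 2 * h (N + 1)"
    by (auto simp: hext_def)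
  moreover have "h 1 \<le> h j" "h j \<le> h (N + 1)"
    using Omega_less[OF h, of 1 j] Omega_less[OF h, of j "N + 1"] j
    by (cases "j = 1"; cases "j = N + 1"; auto)+
  ultimately show "eps / rho ka0 eps / 2 < h j" and "eps / rho ka0 eps / 2 < 1 - h j"
    unfolding g_def[symmetric] by linarith+
qed

lemma Omega_layer_dist:
  assumes h: "h \<in> Omega N ka0 eps" and il: "1 \<le> i" "i \<le> N + 1" "1 \<le> l" "l \<le> N + 1" "i \<noteq> l"
  shows "eps / rho ka0 eps < \<bar>h i - h l\<bar>"
  using Omega_layer_gap[OF h, of i l] Omega_layer_gap[OF h, of l i] il by (cases "i < l") auto

lemma eventually_in_Omega:
  assumes lim: "\<And>j. ((\<lambda>n. hs n j) \<longlongrightarrow> h j) F" and h: "h \<in> Omega N ka0 eps"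
  shows "eventually (\<lambda>n. hs n \<in> Omega N ka0 eps) F"
proof -
  let ?g = "eps / rho ka0 eps"
  have lim_ext: "((\<lambda>n. hext N (hs n) j) \<longlongrightarrow> hext N h j) F" for j
    unfolding hext_def by (cases "j = 0"; cases "j = N + 2") (auto intro: tendsto_minus tendsto_diff lim)
  have "eventually (\<lambda>n. 0 < hs n 1) F"
    using h by (intro order_tendstoD(1)[OF lim]) (simp add: Omega_def)
  moreover have "eventually (\<lambda>n. hs n (N + 1) < 1) F"
    using h by (intro order_tendstoD(2)[OF lim]) (simp add: Omega_def)
  moreover have "eventually (\<lambda>n. \<forall>j\<in>{1..N}. hs n j < hs n (j + 1)) F"
  proof (rule eventually_ball_finite[rule_format])
    fix j assume "j \<in> {1..N}"
    then have "0 < h (j + 1) - h j" using h by (simp add: Omega_def)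
    from order_tendstoD(1)[OF tendsto_diff[OF lim lim] this]
    show "eventually (\<lambda>n. hs n j < hs n (j + 1)) F" by (rule eventually_mono) simp
  qed simp
  moreover have "eventually (\<lambda>n. \<forall>j\<in>{0..N+1}. ?g < hext N (hs n) (j + 1) - hext N (hs n) j) F"
  proof (rule eventually_ball_finite[rule_format])
    fix j assume "j \<in> {0..N+1}"
    then have "?g < hext N h (j + 1) - hext N h j" using h by (simp add: Omega_def)
    from order_tendstoD(1)[OF tendsto_diff[OF lim_ext lim_ext] this]
    show "eventually (\<lambda>n. ?g < hext N (hs n) (j + 1) - hext N (hs n) j) F" .
  qed simp
  ultimately show ?thesis
    unfolding Omega_def by eventually_elim auto
qed

lemma eventually_hxi_update_in_Omega:
  assumes H: "hxi N hN1 e xi \<in> Omega N ka0 e"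
    and cont: "isCont (\<lambda>t. hN1 e (xi(k := t))) (xi k)" and q: "q \<longlonglongrightarrow> xi k"
  shows "eventually (\<lambda>n. hxi N hN1 e (xi(k := q n)) \<in> Omega N ka0 e) sequentially"
proof (rule eventually_in_Omega[OF _ H])
  fix j
  show "((\<lambda>n. hxi N hN1 e (xi(k := q n)) j) \<longlongrightarrow> hxi N hN1 e xi j) sequentially"
  proof (cases "j = N + 1")
    case True
    from isCont_tendsto_compose[OF cont q] show ?thesis
      using True by (simp add: hxi_def)
  next
    case False
    then show ?thesis
      using q by (cases "j = k") (auto simp: hxi_def)
  qed
qed

lemma has_real_derivative_Ushift_position:
  assumes "(g has_real_derivative g') (at t)"
  shows "((\<lambda>t. Ushift e (g t) s x) has_real_derivative - s * g' / e * U' ((x - g t) / e)) (at t)"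
proof (cases "e = 0")
  case True
  then show ?thesis by (simp add: Ushift_def)
next
  case False
  have "((\<lambda>t. U ((x - g t) / e)) has_real_derivative U' ((x - g t) / e) * ((0 - g') / e)) (at t)"
    by (rule DERIV_chain2[OF has_real_derivative_U]) (use False in \<open>auto intro!: derivative_eq_intros assms\<close>)
  from DERIV_cmult[OF this, of s] show ?thesis
    by (simp add: Ushift_def[abs_def] field_simps)
qed

lemma continuous_on_uh:
  assumes "continuous_on {0..1} (beta e h)"
  shows "continuous_on {0..1} (uh N beta e h)"
proof -
  have "continuous_on UNIV U"
    using has_real_derivative_U DERIV_isCont continuous_at_imp_continuous_on by blast
  moreover have "continuous_on {0..1} (\<lambda>x. (x - c) / e)" for c
    by (cases "e = 0") (auto intro!: continuous_intros)
  ultimately have "continuous_on {0..1} (\<lambda>x. U ((x - c) / e))" for c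
    by (rule continuous_on_compose2) auto
  then have "continuous_on {0..1} (Ushift e c s)" for c s
    unfolding Ushift_def by (intro continuous_intros)
  then show ?thesis
    unfolding uh_def[abs_def] using assms by (intro continuous_intros)
qed

lemma has_real_derivative_uxi:
  assumes k: "1 \<le> k" "k \<le> N"
    and hN1_der: "((\<lambda>t. hN1 e (xi(k := t))) has_real_derivative d) (at (xi k))"
    and beta_der: "((\<lambda>t. beta e (hxi N hN1 e (xi(k := t))) x) has_real_derivative b) (at (xi k))"
  shows "((\<lambda>t. uxi N beta hN1 e (xi(k := t)) x) has_real_derivative
           (-1) ^ k / e * U' ((x - xi k) / e) - (-1) ^ N * d / e * U' ((x - hN1 e xi) / e) + b) (at (xi k))"
proof -
  define H where "H t = hxi N hN1 e (xi(k := t))" for t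
  define H' where "H' j = (if j = k then 1 else if j = N + 1 then d else 0)" for j
  have H_der: "((\<lambda>t. H t j) has_real_derivative H' j) (at (xi k))" for j
    using k hN1_der by (auto simp: H_def H'_def hxi_def)
  have "((\<lambda>t. \<Sum>j = 1..N+1. Ushift e (H t j) ((-1) ^ (j + 1)) x) has_real_derivative
          (\<Sum>j = 1..N+1. (- ((-1) ^ (j + 1)) * H' j / e * U' ((x - H (xi k) j) / e)))) (at (xi k))"
    by (intro DERIV_sum has_real_derivative_Ushift_position H_der)
  also have "(\<Sum>j = 1..N+1. (- ((-1) ^ (j + 1)) * H' j / e * U' ((x - H (xi k) j) / e)))
      = (\<Sum>j = 1..N+1. (if j = k then (-1) ^ k / e * U' ((x - xi k) / e) else 0)
          + (if j = N + 1 then - ((-1) ^ N) * d / e * U' ((x - hN1 e xi) / e) else 0))"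
    using k by (intro sum.cong) (auto simp: H'_def H_def hxi_def)
  also have "\<dots> = (-1) ^ k / e * U' ((x - xi k) / e) - (-1) ^ N * d / e * U' ((x - hN1 e xi) / e)"
    using k by (simp add: sum.distrib)
  finally show ?thesis
    using beta_der unfolding uxi_def uh_def H_def[symmetric] by (intro DERIV_add)
qed

section \<open>Perturbation of a scaled invertible matrix\<close>

lemma invertible_mat_if_trivial_kernel:
  fixes A :: "'a :: field mat"
  assumes A: "A \<in> carrier_mat n n"
    and ker: "\<And>v. v \<in> carrier_vec n \<Longrightarrow> A *\<^sub>v v = 0\<^sub>v n \<Longrightarrow> v = 0\<^sub>v n"
  shows "invertible_mat A"
proof -
  have "det A \<noteq> 0"
    using det_0_iff_vec_prod_zero_field[OF A] ker by blast
  from det_non_zero_imp_unit[OF A this, of "()"]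
  obtain B where "B \<in> carrier_mat n n" "B * A = 1\<^sub>m n" "A * B = 1\<^sub>m n"
    unfolding Units_def ring_mat_def by auto
  then show ?thesis
    using A unfolding invertible_mat_def inverts_mat_def by auto
qed

lemma abs_scalar_prod_le:
  fixes v w :: "real vec"
  assumes "v \<in> carrier_vec n" "w \<in> carrier_vec n"
    and "\<And>l. l < n \<Longrightarrow> \<bar>v $ l\<bar> \<le> a" and "\<And>l. l < n \<Longrightarrow> \<bar>w $ l\<bar> \<le> b"
  shows "\<bar>scalar_prod v w\<bar> \<le> n * a * b"
proof -
  have "\<bar>scalar_prod v w\<bar> = \<bar>\<Sum>l<n. v $ l * w $ l\<bar>"
    using assms(2) by (simp add: scalar_prod_def atLeast0LessThan)
  also have "\<dots> \<le> (\<Sum>l<n. \<bar>v $ l\<bar> * \<bar>w $ l\<bar>)"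
    unfolding abs_mult[symmetric] by (rule sum_abs)
  also have "\<dots> \<le> (\<Sum>l<n. a * b)"
  proof (rule sum_mono)
    fix l assume "l \<in> {..<n}"
    then show "\<bar>v $ l\<bar> * \<bar>w $ l\<bar> \<le> a * b"
      using assms(3,4)[of l] by (intro mult_mono) auto
  qed
  finally show ?thesis by simp
qed

lemma mult_mat_vec_left_inverse:
  fixes S A B :: "'a :: comm_ring_1 mat"
  assumes S: "S \<in> carrier_mat n n" and A: "A \<in> carrier_mat n n" and B: "B \<in> carrier_mat n n"
    and BA: "B * A = 1\<^sub>m n" and w: "w \<in> carrier_vec n"
  shows "B *\<^sub>v (S *\<^sub>v w) = lam \<cdot>\<^sub>v w + (B * (S - lam \<cdot>\<^sub>m A)) *\<^sub>v w"
proof -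
  have "S = lam \<cdot>\<^sub>m A + (S - lam \<cdot>\<^sub>m A)"
    using S A by (intro eq_matI) auto
  then have "B * S = B * (lam \<cdot>\<^sub>m A) + B * (S - lam \<cdot>\<^sub>m A)"
    using S A B by (metis mult_add_distrib_mat minus_carrier_mat smult_carrier_mat)
  also have "B * (lam \<cdot>\<^sub>m A) = lam \<cdot>\<^sub>m 1\<^sub>m n"
    using A B BA by (simp add: mult_smult_distrib)
  finally have "B * S = lam \<cdot>\<^sub>m 1\<^sub>m n + B * (S - lam \<cdot>\<^sub>m A)" .
  then have "B *\<^sub>v (S *\<^sub>v w) = (lam \<cdot>\<^sub>m 1\<^sub>m n + B * (S - lam \<cdot>\<^sub>m A)) *\<^sub>v w"
    using assoc_mult_mat_vec[OF B S w] by simp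
  also have "\<dots> = lam \<cdot>\<^sub>v w + (B * (S - lam \<cdot>\<^sub>m A)) *\<^sub>v w"
    using A B S w by (subst add_mult_distrib_mat_vec) auto
  finally show ?thesis .
qed

lemma left_inverse_residual_bound:
  fixes S A B :: "real mat"
  assumes S: "S \<in> carrier_mat n n" and A: "A \<in> carrier_mat n n" and B: "B \<in> carrier_mat n n"
    and BA: "B * A = 1\<^sub>m n" and w: "w \<in> carrier_vec n" and k: "k < n"
    and B_bound: "\<And>k j. k < n \<Longrightarrow> j < n \<Longrightarrow> \<bar>B $$ (k, j)\<bar> \<le> \<beta>"
    and S_near: "\<And>k j. k < n \<Longrightarrow> j < n \<Longrightarrow> \<bar>S $$ (k, j) - lam * A $$ (k, j)\<bar> \<le> D"
    and w_bound: "\<And>l. l < n \<Longrightarrow> \<bar>w $ l\<bar> \<le> m"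
  shows "\<bar>(B *\<^sub>v (S *\<^sub>v w)) $ k - lam * w $ k\<bar> \<le> n * (n * \<beta> * D) * m"
proof -
  define E where "E = S - lam \<cdot>\<^sub>m A"
  have E: "E \<in> carrier_mat n n"
    using S A unfolding E_def by (metis minus_carrier_mat smult_carrier_mat)
  have BE: "\<bar>(B * E) $$ (k', l)\<bar> \<le> n * \<beta> * D" if "k' < n" "l < n" for k' l
  proof -
    have "(B * E) $$ (k', l) = scalar_prod (row B k') (col E l)"
      using that B E by simp
    also have "\<bar>\<dots>\<bar> \<le> n * \<beta> * D"
      by (rule abs_scalar_prod_le[of _ n]) (use that B E S A B_bound S_near in \<open>auto simp: E_def\<close>)
    finally show ?thesis .
  qed
  have "(B *\<^sub>v (S *\<^sub>v w)) $ k - lam * w $ k = ((B * E) *\<^sub>v w) $ k"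
    using mult_mat_vec_left_inverse[OF S A B BA w, of lam] k w B E by (simp add: E_def)
  also have "\<dots> = scalar_prod (row (B * E) k) w"
    using k B E by (intro index_mult_mat_vec) simp
  also have "\<bar>\<dots>\<bar> \<le> n * (n * \<beta> * D) * m"
  proof (rule abs_scalar_prod_le[OF _ w])
    show "row (B * E) k \<in> carrier_vec n"
      using row_carrier[of "B * E" k] B E by simp
    fix l assume l: "l < n"
    show "\<bar>row (B * E) k $ l\<bar> \<le> n * \<beta> * D"
      using BE[OF k l] k l B E by (subst index_row) auto
  qed (rule w_bound)
  finally show ?thesis .
qed

lemma left_inverse_solution_bound:
  fixes S A B :: "real mat"
  assumes S: "S \<in> carrier_mat n n" and A: "A \<in> carrier_mat n n" and B: "B \<in> carrier_mat n n"
    and BA: "B * A = 1\<^sub>m n" and w: "w \<in> carrier_vec n"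
    and B_bound: "\<And>k j. k < n \<Longrightarrow> j < n \<Longrightarrow> \<bar>B $$ (k, j)\<bar> \<le> \<beta>"
    and S_near: "\<And>k j. k < n \<Longrightarrow> j < n \<Longrightarrow> \<bar>S $$ (k, j) - lam * A $$ (k, j)\<bar> \<le> D"
    and lam: "0 < lam" and small: "2 * real n * real n * \<beta> * D \<le> lam"
    and rhs_bound: "\<And>k. k < n \<Longrightarrow> \<bar>(B *\<^sub>v (S *\<^sub>v w)) $ k\<bar> \<le> \<gamma>"
    and l: "l < n"
  shows "lam * \<bar>w $ l\<bar> \<le> 2 * \<gamma>"
proof -
  \<comment> \<open>Evaluate the residual bound at a coordinate where \<open>\<bar>w $ i\<bar>\<close> is maximal.\<close>
  define m where "m = Max ((\<lambda>l. \<bar>w $ l\<bar>) ` {..<n})"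
  have w_bound: "\<bar>w $ l'\<bar> \<le> m" if "l' < n" for l'
    using that by (auto simp: m_def)
  have "m \<in> (\<lambda>l. \<bar>w $ l\<bar>) ` {..<n}"
    unfolding m_def using l by (intro Max_in) auto
  then obtain i where i: "i < n" "m = \<bar>w $ i\<bar>" by auto
  have "lam * m \<le> \<bar>(B *\<^sub>v (S *\<^sub>v w)) $ i - lam * w $ i\<bar> + \<bar>(B *\<^sub>v (S *\<^sub>v w)) $ i\<bar>"
    using i lam by (simp add: abs_mult)
  also have "\<dots> \<le> n * (n * \<beta> * D) * m + \<gamma>"
    using left_inverse_residual_bound[OF S A B BA w i(1) B_bound S_near w_bound] rhs_bound[OF i(1)]
    by linarith
  also have "n * (n * \<beta> * D) * m = (2 * real n * real n * \<beta> * D) * m / 2" by simp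
  also have "\<dots> \<le> lam * m / 2"
    using small i by (intro divide_right_mono mult_right_mono) auto
  finally have "lam * m \<le> 2 * \<gamma>" by simp
  then show ?thesis
    using w_bound[OF l] lam by (smt (verit) mult_left_mono)
qed

lemma invertible_near_scaled_left_inverse:
  fixes S A B :: "real mat"
  assumes S: "S \<in> carrier_mat n n" and A: "A \<in> carrier_mat n n" and B: "B \<in> carrier_mat n n"
    and BA: "B * A = 1\<^sub>m n"
    and B_bound: "\<And>k j. k < n \<Longrightarrow> j < n \<Longrightarrow> \<bar>B $$ (k, j)\<bar> \<le> \<beta>"
    and S_near: "\<And>k j. k < n \<Longrightarrow> j < n \<Longrightarrow> \<bar>S $$ (k, j) - lam * A $$ (k, j)\<bar> \<le> D"
    and lam: "0 < lam" and small: "2 * real n * real n * \<beta> * D \<le> lam"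
  shows "invertible_mat S"
proof (rule invertible_mat_if_trivial_kernel[OF S])
  fix v assume v: "v \<in> carrier_vec n" and Sv: "S *\<^sub>v v = 0\<^sub>v n"
  have "lam * \<bar>v $ l\<bar> \<le> 2 * 0" if "l < n" for l
    by (rule left_inverse_solution_bound[OF S A B BA v B_bound S_near lam small]) (use Sv B that in auto)
  then show "v = 0\<^sub>v n"
    using v lam by (intro eq_vecI) (auto simp: mult_le_0_iff)
qed

lemma inverse_near_scaled_left_inverse:
  fixes S A B :: "real mat"
  assumes S: "S \<in> carrier_mat n n" and A: "A \<in> carrier_mat n n" and B: "B \<in> carrier_mat n n"
    and BA: "B * A = 1\<^sub>m n"
    and B_bound: "\<And>k j. k < n \<Longrightarrow> j < n \<Longrightarrow> \<bar>B $$ (k, j)\<bar> \<le> \<beta>"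
    and S_near: "\<And>k j. k < n \<Longrightarrow> j < n \<Longrightarrow> \<bar>S $$ (k, j) - lam * A $$ (k, j)\<bar> \<le> D"
    and lam: "0 < lam" and small: "2 * real n * real n * \<beta> * D \<le> lam"
    and T: "T \<in> carrier_mat n n" and inv: "inverts_mat S T" and k: "k < n" and j: "j < n"
  shows "\<bar>T $$ (k, j) - B $$ (k, j) / lam\<bar> \<le> 2 * real n * real n * \<beta>\<^sup>2 * D / lam\<^sup>2"
proof -
  define w where "w = col T j"
  have w: "w \<in> carrier_vec n"
    unfolding w_def using T j by simp
  have "S * T = 1\<^sub>m n"
    using inv S by (simp add: inverts_mat_def)
  then have "S *\<^sub>v w = unit_vec n j"
    unfolding w_def using S T j by (simp flip: col_mult2)
  then have Bc: "(B *\<^sub>v (S *\<^sub>v w)) $ l = B $$ (l, j)" if "l < n" for l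
    using B j that by simp
  have w_bound: "\<bar>w $ l\<bar> \<le> 2 * \<beta> / lam" if "l < n" for l
  proof -
    have "lam * \<bar>w $ l\<bar> \<le> 2 * \<beta>"
      by (rule left_inverse_solution_bound[OF S A B BA w B_bound S_near lam small])
        (use Bc B_bound j that in auto)
    then show ?thesis
      using lam by (simp add: pos_le_divide_eq mult.commute)
  qed
  have residual: "\<bar>B $$ (k, j) - lam * T $$ (k, j)\<bar> \<le> n * (n * \<beta> * D) * (2 * \<beta> / lam)"
    using left_inverse_residual_bound[OF S A B BA w k B_bound S_near w_bound] Bc[OF k] k T j
    by (simp add: w_def)
  have "T $$ (k, j) - B $$ (k, j) / lam = - (B $$ (k, j) - lam * T $$ (k, j)) / lam"
    using lam by (simp add: field_simps)
  then have "\<bar>T $$ (k, j) - B $$ (k, j) / lam\<bar> = \<bar>B $$ (k, j) - lam * T $$ (k, j)\<bar> / lam"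
    using lam by simp
  also have "\<dots> \<le> n * (n * \<beta> * D) * (2 * \<beta> / lam) / lam"
    using residual lam by (intro divide_right_mono) auto
  also have "\<dots> = 2 * real n * real n * \<beta>\<^sup>2 * D / lam\<^sup>2"
    by (simp add: power2_eq_square)
  finally show ?thesis .
qed

(* limit_gram_mat n = D (I + J) D with D = diag ((-1)^k) and J the all-ones matrix; by
   Sherman-Morrison its inverse is D (I - J / (n + 1)) D.  Index k stands for layer k + 1. *)
definition limit_gram_mat :: "nat \<Rightarrow> real mat" where
  "limit_gram_mat n = mat n n (\<lambda>(k, j). (-1) ^ (k + j) * ((if k = j then 1 else 0) + 1))"

definition limit_gram_inv :: "nat \<Rightarrow> real mat" where
  "limit_gram_inv n = mat n n (\<lambda>(k, j). (if k = j then 1 else 0) - (-1) ^ (k + j) / (n + 1))"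

lemma minus_one_power_add_cancel: "(-1 :: real) ^ (k + p) * (-1) ^ (p + l) = (-1) ^ (k + l)"
proof -
  have "(-1 :: real) ^ (k + p) * (-1) ^ (p + l) = (-1) ^ (k + l) * ((-1) * (-1)) ^ p"
    by (simp add: power_add power_mult_distrib)
  then show ?thesis by simp
qed

lemma limit_gram_inv_mult: "limit_gram_inv n * limit_gram_mat n = 1\<^sub>m n"
proof (rule eq_matI)
  fix k l assume k: "k < dim_row (1\<^sub>m n :: real mat)" and l: "l < dim_col (1\<^sub>m n :: real mat)"
  have entry: "limit_gram_inv n $$ (k, p) * limit_gram_mat n $$ (p, l)
      = (if p = k then (-1) ^ (p + l) * ((if p = l then 1 else 0) + 1) else 0)
        - (-1) ^ (k + l) / (n + 1) * ((if p = l then 1 else 0) + 1)" if p: "p < n" for p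
  proof -
    have "limit_gram_inv n $$ (k, p) * limit_gram_mat n $$ (p, l)
        = (if k = p then 1 else 0) * ((-1) ^ (p + l) * ((if p = l then 1 else 0) + 1))
          - (-1) ^ (k + p) * (-1) ^ (p + l) / (n + 1) * ((if p = l then 1 else 0) + 1)"
      using k l p by (simp add: limit_gram_inv_def limit_gram_mat_def algebra_simps)
    then show ?thesis
      unfolding minus_one_power_add_cancel by simp
  qed
  have "(limit_gram_inv n * limit_gram_mat n) $$ (k, l)
      = (\<Sum>p<n. limit_gram_inv n $$ (k, p) * limit_gram_mat n $$ (p, l))"
    using k l by (simp add: scalar_prod_def atLeast0LessThan limit_gram_inv_def limit_gram_mat_def)
  also have "\<dots> = (\<Sum>p<n. (if p = k then (-1) ^ (p + l) * ((if p = l then 1 else 0) + 1) else 0)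
                 - (-1) ^ (k + l) / (n + 1) * ((if p = l then 1 else 0) + 1))"
    using entry by (intro sum.cong) auto
  also have "\<dots> = (-1) ^ (k + l) * ((if k = l then 1 else 0) + 1) - (-1) ^ (k + l) / (n + 1) * (1 + n)"
  proof -
    have "(\<Sum>p<n. (if p = l then 1 else 0) + 1 :: real) = 1 + n"
      using l by (simp add: sum.distrib)
    then have "(\<Sum>p<n. (-1) ^ (k + l) / (n + 1) * ((if p = l then 1 else 0) + 1))
        = (-1) ^ (k + l) / (n + 1) * (1 + n :: real)"
      by (simp only: flip: sum_distrib_left)
    moreover have "(\<Sum>p<n. (if p = k then (-1) ^ (p + l) * ((if p = l then 1 else 0) + 1) else 0))
        = (-1) ^ (k + l) * ((if k = l then 1 else 0) + 1 :: real)"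
      using k by simp
    ultimately show ?thesis
      by (simp only: sum_subtractf)
  qed
  also have "\<dots> = 1\<^sub>m n $$ (k, l)"
    using k l by (simp add: field_simps power_add)
  finally show "(limit_gram_inv n * limit_gram_mat n) $$ (k, l) = 1\<^sub>m n $$ (k, l)" .
qed (simp_all add: limit_gram_inv_def limit_gram_mat_def)

lemma abs_limit_gram_inv_le:
  assumes "k < n" "j < n"
  shows "\<bar>limit_gram_inv n $$ (k, j)\<bar> \<le> 2"
  using assms by (auto simp: limit_gram_inv_def divide_le_eq le_divide_eq)

section \<open>The Gram matrix of the tangent vectors\<close>

lemma exp_rate_over_eps_tendsto_zero:
  assumes "0 < c" "0 < ka0"
  shows "((\<lambda>e. exp (- c / rho ka0 e) / e) \<longlongrightarrow> 0) (at_right 0)"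
  unfolding rho_def using assms by real_asymp

locale constrained_layers =
  fixes N :: nat and ka0 :: real
    and beta :: "real \<Rightarrow> (nat \<Rightarrow> real) \<Rightarrow> real \<Rightarrow> real"
    and hN1 :: "real \<Rightarrow> (nat \<Rightarrow> real) \<Rightarrow> real"
    and eps1 K0 c0 :: real
  assumes N: "N \<ge> 1"
    and ka0: "0 < ka0"
    and pos_const: "0 < eps1" "0 < K0" "0 < c0"
    and beta_cont: "\<And>eps h. 0 < eps \<Longrightarrow> eps < eps1 \<Longrightarrow> h \<in> Omega N ka0 eps \<Longrightarrow>
        continuous_on {0..1} (beta eps h)"
    and beta_deriv: "\<And>eps xi k x. 0 < eps \<Longrightarrow> eps < eps1 \<Longrightarrow> hxi N hN1 eps xi \<in> Omega N ka0 eps \<Longrightarrow>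
        k \<in> {1..N} \<Longrightarrow> x \<in> {0..1} \<Longrightarrow>
        \<exists>D. ((\<lambda>t. beta eps (hxi N hN1 eps (xi(k := t))) x) has_real_derivative D) (at (xi k))
            \<and> \<bar>D\<bar> \<le> expbound ka0 K0 c0 eps"
    and hN1_deriv: "\<And>eps xi k. 0 < eps \<Longrightarrow> eps < eps1 \<Longrightarrow> hxi N hN1 eps xi \<in> Omega N ka0 eps \<Longrightarrow>
        k \<in> {1..N} \<Longrightarrow>
        \<exists>D. ((\<lambda>t. hN1 eps (xi(k := t))) has_real_derivative D) (at (xi k))
            \<and> \<bar>D - (-1) ^ (N - k)\<bar> \<le> expbound ka0 K0 c0 eps"
begin

abbreviation eta :: "real \<Rightarrow> real" where
  "eta e \<equiv> expbound ka0 K0 c0 e"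

abbreviation uk :: "real \<Rightarrow> (nat \<Rightarrow> real) \<Rightarrow> nat \<Rightarrow> real \<Rightarrow> real" where
  "uk e xi k \<equiv> uxi_k N beta hN1 e xi k"

definition tangent_model :: "real \<Rightarrow> (nat \<Rightarrow> real) \<Rightarrow> nat \<Rightarrow> real \<Rightarrow> real" where
  "tangent_model e xi k x = (-1) ^ k / e * (U' ((x - xi k) / e) - U' ((x - hN1 e xi) / e))"

lemma eta_nonneg: "0 \<le> eta e"
  using pos_const by (simp add: expbound_def)

lemma uk_expansion:
  assumes e: "0 < e" "e < eps1" and H: "hxi N hN1 e xi \<in> Omega N ka0 e" and k: "1 \<le> k" "k \<le> N"
  obtains d where "\<bar>d - (-1) ^ (N - k)\<bar> \<le> eta e"
    and "\<And>x. x \<in> {0..1} \<Longrightarrow> ((\<lambda>t. uxi N beta hN1 e (xi(k := t)) x) has_real_derivative uk e xi k x) (at (xi k))"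
    and "\<And>x. x \<in> {0..1} \<Longrightarrow>
           \<bar>uk e xi k x - ((-1) ^ k / e * U' ((x - xi k) / e) - (-1) ^ N * d / e * U' ((x - hN1 e xi) / e))\<bar> \<le> eta e"
proof -
  obtain d where hd: "((\<lambda>t. hN1 e (xi(k := t))) has_real_derivative d) (at (xi k))"
    and d: "\<bar>d - (-1) ^ (N - k)\<bar> \<le> eta e"
    using hN1_deriv[OF e H] k by auto
  have "((\<lambda>t. uxi N beta hN1 e (xi(k := t)) x) has_real_derivative uk e xi k x) (at (xi k))
     \<and> \<bar>uk e xi k x - ((-1) ^ k / e * U' ((x - xi k) / e) - (-1) ^ N * d / e * U' ((x - hN1 e xi) / e))\<bar> \<le> eta e"
    if x: "x \<in> {0..1}" for x
  proof -
    obtain b where bd: "((\<lambda>t. beta e (hxi N hN1 e (xi(k := t))) x) has_real_derivative b) (at (xi k))"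
      and b: "\<bar>b\<bar> \<le> eta e"
      using beta_deriv[OF e H _ x] k by auto
    note D = has_real_derivative_uxi[of k N hN1 e xi d beta x b, OF k hd bd]
    then have "uk e xi k x = (-1) ^ k / e * U' ((x - xi k) / e) - (-1) ^ N * d / e * U' ((x - hN1 e xi) / e) + b"
      unfolding uxi_k_def by (rule DERIV_imp_deriv)
    then show ?thesis using D b by simp
  qed
  then show ?thesis using that d by blast
qed

lemma uk_near_tangent_model:
  assumes e: "0 < e" "e < eps1" "e \<le> 1" and H: "hxi N hN1 e xi \<in> Omega N ka0 e"
    and k: "1 \<le> k" "k \<le> N" and x: "x \<in> {0..1}"
  shows "\<bar>uk e xi k x - tangent_model e xi k x\<bar> \<le> 2 * eta e / e"
proof -
  obtain d where d: "\<bar>d - (-1) ^ (N - k)\<bar> \<le> eta e"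
    and expansion: "\<bar>uk e xi k x - ((-1) ^ k / e * U' ((x - xi k) / e) - (-1) ^ N * d / e * U' ((x - hN1 e xi) / e))\<bar> \<le> eta e"
    using uk_expansion[OF e(1,2) H k] x by metis
  define W where "W = U' ((x - hN1 e xi) / e)"
  define V where "V = (-1) ^ k / e * U' ((x - xi k) / e) - (-1) ^ N * d / e * W"
  have sign: "(-1) ^ k = (-1) ^ N * (-1 :: real) ^ (N - k)"
    using minus_one_power_add_cancel[of k "N - k" 0] k by simp
  have "V - tangent_model e xi k x = (-1) ^ N * ((-1) ^ (N - k) - d) / e * W"
    unfolding V_def W_def tangent_model_def sign using e by (simp add: field_simps)
  also have "\<bar>\<dots>\<bar> = \<bar>(-1) ^ (N - k) - d\<bar> / e * W"
    using e U'_nonneg by (simp add: W_def abs_mult power_abs)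
  also have "\<dots> \<le> eta e / e * 1"
    using d e U'_nonneg U'_le_1 unfolding W_def
    by (intro mult_mono divide_right_mono) (auto simp: abs_minus_commute)
  finally have model_error: "\<bar>V - tangent_model e xi k x\<bar> \<le> eta e / e"
    by simp
  have "eta e \<le> eta e / e"
    using e eta_nonneg[of e] by (simp add: le_divide_eq mult_left_le)
  then have expansion_error: "\<bar>uk e xi k x - V\<bar> \<le> eta e / e"
    using expansion unfolding V_def W_def by linarith
  have "\<bar>uk e xi k x - tangent_model e xi k x\<bar> \<le> \<bar>uk e xi k x - V\<bar> + \<bar>V - tangent_model e xi k x\<bar>"
    using abs_triangle_ineq[of "uk e xi k x - V" "V - tangent_model e xi k x"] by simp
  then show ?thesis
    using model_error expansion_error by (simp add: field_simps)
qed

lemma abs_tangent_model_le: "0 < e \<Longrightarrow> \<bar>tangent_model e xi k x\<bar> \<le> 1 / e"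
  using U'_nonneg[of "(x - xi k) / e"] U'_le_1[of "(x - xi k) / e"]
    U'_nonneg[of "(x - hN1 e xi) / e"] U'_le_1[of "(x - hN1 e xi) / e"]
  by (simp add: tangent_model_def abs_mult power_abs divide_right_mono abs_le_iff)

lemma continuous_on_tangent_model: "continuous_on {0..1} (tangent_model e xi k)"
  unfolding tangent_model_def[abs_def] by (intro continuous_intros continuous_on_U'_rescaled)

(* uk is a pointwise limit of difference quotients, which are continuous in x as soon as the
   perturbed layer positions are back in Omega, where beta is continuous. *)
lemma uk_measurable:
  assumes e: "0 < e" "e < eps1" and H: "hxi N hN1 e xi \<in> Omega N ka0 e" and k: "1 \<le> k" "k \<le> N"
  shows "uk e xi k \<in> borel_measurable (lebesgue_on {0..1})"
proof -
  obtain d where hd: "((\<lambda>t. hN1 e (xi(k := t))) has_real_derivative d) (at (xi k))"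
    using hN1_deriv[OF e H] k by auto
  have der: "((\<lambda>t. uxi N beta hN1 e (xi(k := t)) x) has_real_derivative uk e xi k x) (at (xi k))"
    if "x \<in> {0..1}" for x
    using uk_expansion[OF e H k] that by metis
  define q where "q n = xi k + inverse (real (Suc n))" for n
  have q_lim: "q \<longlonglongrightarrow> xi k"
    unfolding q_def using tendsto_add[OF tendsto_const LIMSEQ_inverse_real_of_nat] by simp
  then have q: "filterlim q (at (xi k)) sequentially"
    unfolding filterlim_at by (auto simp: q_def)
  define hs where "hs n = hxi N hN1 e (xi(k := q n))" for n
  have ev: "eventually (\<lambda>n. hs n \<in> Omega N ka0 e) sequentially"
    unfolding hs_def using H DERIV_isCont[OF hd] q_lim by (rule eventually_hxi_update_in_Omega)
  define f where "f n x = (if hs n \<in> Omega N ka0 e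
      then (uxi N beta hN1 e (xi(k := q n)) x - uxi N beta hN1 e xi x) / (q n - xi k) else 0)" for n x
  show ?thesis
  proof (rule borel_measurable_LIMSEQ_real[where u = f])
    fix x assume "x \<in> space (lebesgue_on {0..1::real})"
    then have "((\<lambda>t. (uxi N beta hN1 e (xi(k := t)) x - uxi N beta hN1 e xi x) / (t - xi k))
        \<longlongrightarrow> uk e xi k x) (at (xi k))"
      using der[of x] by (simp add: has_field_derivative_iff)
    from filterlim_compose[OF this q]
    show "(\<lambda>n. f n x) \<longlonglongrightarrow> uk e xi k x"
      by (rule Lim_transform_eventually) (use ev in \<open>auto elim!: eventually_mono simp: f_def\<close>)
  next
    fix n
    show "f n \<in> borel_measurable (lebesgue_on {0..1})"
    proof (cases "hs n \<in> Omega N ka0 e")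
      case True
      have "continuous_on {0..1} (uxi N beta hN1 e (xi(k := q n)))"
        "continuous_on {0..1} (uxi N beta hN1 e xi)"
        unfolding uxi_def using continuous_on_uh beta_cont[OF e True[unfolded hs_def]] beta_cont[OF e H]
        by blast+
      moreover have "q n \<noteq> xi k" by (simp add: q_def)
      ultimately have "continuous_on {0..1} (f n)"
        unfolding f_def[abs_def] using True by (simp add: continuous_intros)
      then show ?thesis
        by (rule continuous_imp_measurable_on_sets_lebesgue) simp
    qed (simp add: f_def[abs_def])
  qed
qed

lemma abs_uk_le:
  assumes e: "0 < e" "e < eps1" "e \<le> 1" "eta e \<le> 1" and H: "hxi N hN1 e xi \<in> Omega N ka0 e"
    and k: "1 \<le> k" "k \<le> N" and x: "x \<in> {0..1}"
  shows "\<bar>uk e xi k x\<bar> \<le> 3 / e"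
proof -
  have "2 * eta e / e \<le> 2 / e"
    using e by (simp add: divide_right_mono)
  then show ?thesis
    using uk_near_tangent_model[OF e(1,2,3) H k x] abs_tangent_model_le[OF e(1), of xi k x]
    by (simp add: field_simps; linarith)
qed

lemma integrable_uk_product:
  assumes e: "0 < e" "e < eps1" "e \<le> 1" "eta e \<le> 1" and H: "hxi N hN1 e xi \<in> Omega N ka0 e"
    and k: "1 \<le> k" "k \<le> N" and j: "1 \<le> j" "j \<le> N"
  shows "(\<lambda>x. uk e xi k x * uk e xi j x) integrable_on {0..1}"
proof (rule measurable_bounded_by_integrable_imp_integrable_real)
  show "(\<lambda>x. uk e xi k x * uk e xi j x) \<in> borel_measurable (lebesgue_on {0..1})"
    using uk_measurable[OF e(1,2) H k] uk_measurable[OF e(1,2) H j] by (rule borel_measurable_times)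
  show "(\<lambda>x. 3 / e * (3 / e)) integrable_on {0..1::real}"
    by (rule integrable_continuous_real) simp
  show "\<bar>uk e xi k x * uk e xi j x\<bar> \<le> 3 / e * (3 / e)" if "x \<in> {0..1}" for x
    unfolding abs_mult using abs_uk_le[OF e H k that] abs_uk_le[OF e H j that] e(1)
    by (intro mult_mono) auto
qed simp

lemma L2inner_uk_near_tangent_model:
  assumes e: "0 < e" "e < eps1" "e \<le> 1" "eta e \<le> 1" and H: "hxi N hN1 e xi \<in> Omega N ka0 e"
    and k: "1 \<le> k" "k \<le> N" and j: "1 \<le> j" "j \<le> N"
  shows "\<bar>L2inner (uk e xi k) (uk e xi j) - integral {0..1} (\<lambda>x. tangent_model e xi k x * tangent_model e xi j x)\<bar>
           \<le> 8 * eta e / e\<^sup>2"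
proof -
  let ?m = "tangent_model e xi"
  note int_uk = integrable_uk_product[OF e H k j]
  have int_m: "(\<lambda>x. ?m k x * ?m j x) integrable_on {0..1}"
    by (intro integrable_continuous_real continuous_intros continuous_on_tangent_model)
  have diff_eq: "L2inner (uk e xi k) (uk e xi j) - integral {0..1} (\<lambda>x. ?m k x * ?m j x)
      = integral {0..1} (\<lambda>x. uk e xi k x * uk e xi j x - ?m k x * ?m j x)"
    unfolding L2inner_def by (rule integral_diff[OF int_uk int_m, symmetric])
  have "\<bar>integral {0..1} (\<lambda>x. uk e xi k x * uk e xi j x - ?m k x * ?m j x)\<bar> \<le> 8 * eta e / e\<^sup>2"
  proof (rule abs_integral_unit_interval_le)
    show "(\<lambda>x. uk e xi k x * uk e xi j x - ?m k x * ?m j x) integrable_on {0..1}"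
      using int_uk int_m by (rule integrable_diff)
  next
    fix x :: real assume x: "x \<in> {0..1}"
    have "\<bar>uk e xi k x * uk e xi j x - ?m k x * ?m j x\<bar>
        \<le> \<bar>uk e xi k x - ?m k x\<bar> * \<bar>uk e xi j x\<bar> + \<bar>?m k x\<bar> * \<bar>uk e xi j x - ?m j x\<bar>"
      by (rule abs_mult_diff_le)
    also have "\<dots> \<le> (2 * eta e / e) * (3 / e) + (1 / e) * (2 * eta e / e)"
    proof -
      have "\<bar>uk e xi k x - ?m k x\<bar> \<le> 2 * eta e / e" "\<bar>uk e xi j x - ?m j x\<bar> \<le> 2 * eta e / e"
        using uk_near_tangent_model[OF e(1,2,3) H _ _ x] k j by simp_all
      moreover have "\<bar>uk e xi j x\<bar> \<le> 3 / e"
        by (rule abs_uk_le[OF e H j x])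
      moreover have "\<bar>?m k x\<bar> \<le> 1 / e"
        using abs_tangent_model_le[OF e(1)] .
      moreover have "0 \<le> 2 * eta e / e"
        using e(1) eta_nonneg[of e] by simp
      ultimately show ?thesis
        using e(1) by (intro add_mono mult_mono) simp_all
    qed
    also have "\<dots> = 8 * eta e / e\<^sup>2"
      by (simp add: power2_eq_square)
    finally show "\<bar>uk e xi k x * uk e xi j x - ?m k x * ?m j x\<bar> \<le> 8 * eta e / e\<^sup>2" .
  qed
  then show ?thesis
    unfolding diff_eq .
qed

lemma integral_tangent_model_product_eq:
  "integral {0..1} (\<lambda>x. tangent_model e xi k x * tangent_model e xi j x)
     = (-1) ^ (k + j) / e\<^sup>2 * integral {0..1} (\<lambda>x. (U' ((x - xi k) / e) - U' ((x - hN1 e xi) / e))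
                                                 * (U' ((x - xi j) / e) - U' ((x - hN1 e xi) / e)))"
  (is "_ = _ * integral _ ?D")
proof -
  have "tangent_model e xi k x * tangent_model e xi j x = (-1) ^ (k + j) / e\<^sup>2 * ?D x" for x
    by (simp add: tangent_model_def power_add power2_eq_square)
  then have "integral {0..1} (\<lambda>x. tangent_model e xi k x * tangent_model e xi j x)
      = integral {0..1} (\<lambda>x. (-1) ^ (k + j) / e\<^sup>2 * ?D x)"
    by presburger
  also have "\<dots> = (-1) ^ (k + j) / e\<^sup>2 * integral {0..1} ?D"
    by (rule integral_mult[symmetric])
      (intro integrable_continuous_real continuous_intros continuous_on_U'_rescaled)
  finally show ?thesis .
qed

lemma integral_tangent_model_product:
  assumes e: "0 < e" "e \<le> 1" and H: "hxi N hN1 e xi \<in> Omega N ka0 e"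
    and k: "1 \<le> k" "k \<le> N" and j: "1 \<le> j" "j \<le> N"
  shows "\<bar>integral {0..1} (\<lambda>x. tangent_model e xi k x * tangent_model e xi j x)
           - chiX / e * limit_gram_mat N $$ (k - 1, j - 1)\<bar> \<le> 24 * exp (- (1 / 2) / rho ka0 e) / e\<^sup>2"
proof -
  define g where "g = e / rho ka0 e"
  have g: "0 < g" using e by (simp add: g_def rho_def)
  have layers: "hxi N hN1 e xi k = xi k" "hxi N hN1 e xi j = xi j" "hxi N hN1 e xi (N + 1) = hN1 e xi"
    using k j by (auto simp: hxi_def)
  have inside: "g / 2 \<le> c \<and> g / 2 \<le> 1 - c" if "c \<in> {xi k, xi j, hN1 e xi}" for c
    using that Omega_boundary_gap[OF H, of k] Omega_boundary_gap[OF H, of j] Omega_boundary_gap[OF H, of "N + 1"]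
      k j layers by (auto simp: g_def)
  have sep: "g \<le> \<bar>xi k - hN1 e xi\<bar>" "g \<le> \<bar>xi j - hN1 e xi\<bar>" "k \<noteq> j \<Longrightarrow> g \<le> \<bar>xi k - xi j\<bar>"
    using Omega_layer_dist[OF H, of k "N + 1"] Omega_layer_dist[OF H, of j "N + 1"] Omega_layer_dist[OF H, of k j]
      k j layers by (auto simp: g_def)
  have same_layer: "xi k = xi j \<longleftrightarrow> k = j"
    using sep(3) g by force
  have gram: "limit_gram_mat N $$ (k - 1, j - 1) = (-1) ^ (k + j) * ((if k = j then 1 else 0) + 1)"
  proof -
    obtain a b where ab: "k = Suc a" "j = Suc b"
      using k j by (metis Suc_le_D One_nat_def)
    show ?thesis
      using k j unfolding ab by (simp add: limit_gram_mat_def)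
  qed
  let ?I = "integral {0..1} (\<lambda>x. (U' ((x - xi k) / e) - U' ((x - hN1 e xi) / e))
                                   * (U' ((x - xi j) / e) - U' ((x - hN1 e xi) / e)))"
  have "\<bar>?I - e * chiX * ((if k = j then 1 else 0) + 1)\<bar> \<le> 24 * exp (- g / (2 * e))"
    using integral_U'_difference_product[OF e less_imp_le[OF g] inside sep(1,2)] sep(3) same_layer
    by simp
  moreover have "g / (2 * e) = (1 / 2) / rho ka0 e"
    using e by (simp add: g_def)
  moreover have "integral {0..1} (\<lambda>x. tangent_model e xi k x * tangent_model e xi j x)
      - chiX / e * limit_gram_mat N $$ (k - 1, j - 1)
      = (-1) ^ (k + j) / e\<^sup>2 * (?I - e * chiX * ((if k = j then 1 else 0) + 1))"
    unfolding integral_tangent_model_product_eq gram using e by (simp add: field_simps power2_eq_square)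
  ultimately show ?thesis
    using e by (simp add: abs_mult power_abs divide_right_mono)
qed

abbreviation entry_error :: "real \<Rightarrow> real" where
  "entry_error e \<equiv> expbound ka0 (24 + 8 * K0) (min (1 / 2) c0) e"

lemma Smat_entry_near:
  assumes e: "0 < e" "e < eps1" "e \<le> 1" "eta e \<le> 1" and H: "hxi N hN1 e xi \<in> Omega N ka0 e"
    and k: "k < N" and j: "j < N"
  shows "\<bar>Smat N beta hN1 e xi $$ (k, j) - chiX / e * limit_gram_mat N $$ (k, j)\<bar>
           \<le> entry_error e / e\<^sup>2"
proof -
  let ?c = "min (1 / 2) c0"
  have rho: "0 < rho ka0 e" using e by (simp add: rho_def)
  have "?c / rho ka0 e \<le> (1 / 2) / rho ka0 e" "?c / rho ka0 e \<le> c0 / rho ka0 e"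
    by (rule divide_right_mono; use rho in simp)+
  then have "exp (- (1 / 2) / rho ka0 e) \<le> exp (- ?c / rho ka0 e)" "exp (- c0 / rho ka0 e) \<le> exp (- ?c / rho ka0 e)"
    by simp_all
  then have "24 * exp (- (1 / 2) / rho ka0 e) + 8 * (K0 * exp (- c0 / rho ka0 e))
      \<le> 24 * exp (- ?c / rho ka0 e) + 8 * (K0 * exp (- ?c / rho ka0 e))"
    using pos_const by (intro add_mono mult_left_mono) auto
  then have "24 * exp (- (1 / 2) / rho ka0 e) + 8 * eta e \<le> expbound ka0 (24 + 8 * K0) ?c e"
    by (simp add: expbound_def algebra_simps)
  moreover have "\<bar>L2inner (uk e xi (k + 1)) (uk e xi (j + 1))
      - integral {0..1} (\<lambda>x. tangent_model e xi (k + 1) x * tangent_model e xi (j + 1) x)\<bar> \<le> 8 * eta e / e\<^sup>2"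
    using k j by (intro L2inner_uk_near_tangent_model[OF e H]) auto
  moreover have "\<bar>integral {0..1} (\<lambda>x. tangent_model e xi (k + 1) x * tangent_model e xi (j + 1) x)
      - chiX / e * limit_gram_mat N $$ (k, j)\<bar> \<le> 24 * exp (- (1 / 2) / rho ka0 e) / e\<^sup>2"
    using integral_tangent_model_product[OF e(1,3) H, of "k + 1" "j + 1"] k j by simp
  moreover have "Smat N beta hN1 e xi $$ (k, j) = L2inner (uk e xi (k + 1)) (uk e xi (j + 1))"
    using k j by (simp add: Smat_def)
  ultimately show ?thesis
    by (smt (verit) add_divide_distrib divide_right_mono zero_le_power2)
qed

lemma Smat_inverse_near:
  assumes e: "0 < e" "e < eps1" "e \<le> 1" "eta e \<le> 1" and H: "hxi N hN1 e xi \<in> Omega N ka0 e"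
    and small: "4 * real N ^ 2 * entry_error e / e \<le> chiX"
  shows "invertible_mat (Smat N beta hN1 e xi)"
    and "\<And>T k j. T \<in> carrier_mat N N \<Longrightarrow> inverts_mat (Smat N beta hN1 e xi) T \<Longrightarrow> k < N \<Longrightarrow> j < N \<Longrightarrow>
           \<bar>T $$ (k, j) - e / chiX * ((if k = j then 1 else 0) + 1 / (N + 1) * (-1) ^ ((k + 1) + (j + 1) + 1))\<bar>
           \<le> expbound ka0 (8 * real N ^ 2 * (24 + 8 * K0) / chiX\<^sup>2) (min (1 / 2) c0) e"
proof -
  let ?S = "Smat N beta hN1 e xi" and ?lam = "chiX / e" and ?D = "entry_error e / e\<^sup>2"
  note chiX = chiX_pos
  have S: "?S \<in> carrier_mat N N" by (simp add: Smat_def)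
  have A: "limit_gram_mat N \<in> carrier_mat N N" and B: "limit_gram_inv N \<in> carrier_mat N N"
    by (simp_all add: limit_gram_mat_def limit_gram_inv_def)
  have "2 * real N * real N * 2 * ?D = (4 * real N ^ 2 * entry_error e / e) / e"
    by (simp add: power2_eq_square)
  also have "\<dots> \<le> ?lam"
    using small e by (intro divide_right_mono) auto
  finally have small': "2 * real N * real N * 2 * ?D \<le> ?lam" .
  have B_bound: "\<And>k j. k < N \<Longrightarrow> j < N \<Longrightarrow> \<bar>limit_gram_inv N $$ (k, j)\<bar> \<le> 2"
    by (rule abs_limit_gram_inv_le)
  have S_near: "\<And>k j. k < N \<Longrightarrow> j < N \<Longrightarrow> \<bar>?S $$ (k, j) - ?lam * limit_gram_mat N $$ (k, j)\<bar> \<le> ?D"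
    by (rule Smat_entry_near[OF e H])
  have lam: "0 < ?lam"
    using chiX e by simp
  show "invertible_mat ?S"
    by (rule invertible_near_scaled_left_inverse[OF S A B limit_gram_inv_mult B_bound S_near lam small'])
  fix T k j assume T: "T \<in> carrier_mat N N" and inv: "inverts_mat ?S T" and k: "k < N" and j: "j < N"
  have target_eq: "limit_gram_inv N $$ (k, j) / ?lam
      = e / chiX * ((if k = j then 1 else 0) + 1 / (N + 1) * (-1) ^ ((k + 1) + (j + 1) + 1))"
    using k j by (simp add: limit_gram_inv_def power_add field_simps)
  have error_eq: "2 * real N * real N * 2\<^sup>2 * ?D / ?lam\<^sup>2
      = expbound ka0 (8 * real N ^ 2 * (24 + 8 * K0) / chiX\<^sup>2) (min (1 / 2) c0) e"
    using e chiX by (simp add: expbound_def power2_eq_square field_simps)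
  have "\<bar>T $$ (k, j) - limit_gram_inv N $$ (k, j) / ?lam\<bar> \<le> 2 * real N * real N * 2\<^sup>2 * ?D / ?lam\<^sup>2"
    by (rule inverse_near_scaled_left_inverse[OF S A B limit_gram_inv_mult B_bound S_near lam small' T inv k j])
  then show "\<bar>T $$ (k, j) - e / chiX * ((if k = j then 1 else 0) + 1 / (N + 1) * (-1) ^ ((k + 1) + (j + 1) + 1))\<bar>
           \<le> expbound ka0 (8 * real N ^ 2 * (24 + 8 * K0) / chiX\<^sup>2) (min (1 / 2) c0) e"
    unfolding target_eq error_eq .
qed

lemma eventually_small_eps:
  "eventually (\<lambda>e. e < eps1 \<and> e \<le> 1 \<and> eta e \<le> 1 \<and> 4 * real N ^ 2 * entry_error e / e \<le> chiX) (at_right 0)"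
proof -
  have ident: "((\<lambda>e. e) \<longlongrightarrow> 0) (at_right (0 :: real))"
    by (rule tendsto_ident_at)
  have c: "0 < min (1 / 2) c0" using pos_const by simp
  have "((\<lambda>e. 4 * real N ^ 2 * (24 + 8 * K0) * (exp (- min (1 / 2) c0 / rho ka0 e) / e)) \<longlongrightarrow> 0) (at_right 0)"
    using exp_rate_over_eps_tendsto_zero[OF c ka0] by (rule tendsto_mult_right_zero)
  from order_tendstoD(2)[OF this chiX_pos]
  have "eventually (\<lambda>e. 4 * real N ^ 2 * entry_error e / e < chiX) (at_right 0)"
    by (rule eventually_mono) (simp add: expbound_def)
  moreover have "((\<lambda>e. e * (exp (- c0 / rho ka0 e) / e)) \<longlongrightarrow> 0) (at_right 0)"
    using tendsto_mult[OF ident exp_rate_over_eps_tendsto_zero[OF pos_const(3) ka0]] by simp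
  then have "((\<lambda>e. K0 * (e * (exp (- c0 / rho ka0 e) / e))) \<longlongrightarrow> 0) (at_right 0)"
    by (rule tendsto_mult_right_zero)
  then have "eventually (\<lambda>e. K0 * (e * (exp (- c0 / rho ka0 e) / e)) < 1) (at_right 0)"
    by (rule order_tendstoD(2)) simp
  then have "eventually (\<lambda>e. eta e < 1) (at_right 0)"
    using eventually_at_right_less by eventually_elim (simp add: expbound_def)
  moreover have "eventually (\<lambda>e. e < eps1) (at_right 0)"
    by (rule order_tendstoD(2)[OF ident pos_const(1)])
  moreover have "eventually (\<lambda>e. e < 1) (at_right (0 :: real))"
    by (rule order_tendstoD(2)[OF ident]) simp
  ultimately show ?thesis
    by eventually_elim auto
qed

theorem Smat_inverse_asymptotics:
  "\<exists>K c eps0. 0 < K \<and> 0 < c \<and> 0 < eps0 \<and>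
    (\<forall>eps xi. 0 < eps \<and> eps < eps0 \<and> hxi N hN1 eps xi \<in> Omega N ka0 eps \<longrightarrow>
       invertible_mat (Smat N beta hN1 eps xi) \<and>
       (\<forall>T \<in> carrier_mat N N. inverts_mat (Smat N beta hN1 eps xi) T \<longrightarrow>
          (\<forall>k < N. \<forall>j < N.
             \<bar>T $$ (k, j) - eps / chiX * ((if k = j then 1 else 0)
                 + 1 / (N + 1) * (-1) ^ ((k + 1) + (j + 1) + 1))\<bar>
             \<le> expbound ka0 K c eps)))"
proof -
  obtain eps0 where eps0: "0 < eps0"
    and small: "\<And>e. 0 < e \<Longrightarrow> e < eps0 \<Longrightarrow>
                  e < eps1 \<and> e \<le> 1 \<and> eta e \<le> 1 \<and> 4 * real N ^ 2 * entry_error e / e \<le> chiX"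
    using eventually_small_eps unfolding eventually_at_right_field by auto
  have K: "0 < 8 * real N ^ 2 * (24 + 8 * K0) / chiX\<^sup>2" and c: "0 < min (1 / 2) c0"
    using N pos_const chiX_pos by simp_all
  show ?thesis
  proof (rule exI[of _ "8 * real N ^ 2 * (24 + 8 * K0) / chiX\<^sup>2"], rule exI[of _ "min (1 / 2) c0"],
      rule exI[of _ eps0], intro conjI allI impI ballI)
    fix e xi assume "0 < e \<and> e < eps0 \<and> hxi N hN1 e xi \<in> Omega N ka0 e"
    then have e: "0 < e" "e < eps1" "e \<le> 1" "eta e \<le> 1" and H: "hxi N hN1 e xi \<in> Omega N ka0 e"
      and small_e: "4 * real N ^ 2 * entry_error e / e \<le> chiX"
      using small by auto
    note inverse = Smat_inverse_near[OF e H small_e]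
    show "invertible_mat (Smat N beta hN1 e xi)"
      by (rule inverse(1))
    fix T k j assume "T \<in> carrier_mat N N" "inverts_mat (Smat N beta hN1 e xi) T" "k < N" "j < N"
    then show "\<bar>T $$ (k, j) - e / chiX * ((if k = j then 1 else 0) + 1 / (N + 1) * (-1) ^ ((k + 1) + (j + 1) + 1))\<bar>
        \<le> expbound ka0 (8 * real N ^ 2 * (24 + 8 * K0) / chiX\<^sup>2) (min (1 / 2) c0) e"
      by (rule inverse(2))
  qed (use K c eps0 in auto)
qed

end

(* Only the derivative bounds on beta and h_(N+1) enter. *)
theorem lemma5p10:
  fixes N :: nat and ka0 mu :: real
    and beta :: "real \<Rightarrow> (nat \<Rightarrow> real) \<Rightarrow> real \<Rightarrow> real"
    and hN1 :: "real \<Rightarrow> (nat \<Rightarrow> real) \<Rightarrow> real"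
    and eps1 K0 c0 :: real
  assumes N: "N \<ge> 1"
    and ka0: "0 < ka0" "ka0 < 1"
    and mu: "-1 < mu" "mu < 1"
    and pos_const: "0 < eps1" "0 < K0" "0 < c0"
    \<comment> \<open>beta_N = ((-1)^N - 1)/2 + O(exp), continuous in x\<close>
    and beta_val: "\<And>eps h x. 0 < eps \<Longrightarrow> eps < eps1 \<Longrightarrow> h \<in> Omega N ka0 eps \<Longrightarrow> x \<in> {0..1} \<Longrightarrow>
        \<bar>beta eps h x - ((-1) ^ N - 1) / 2\<bar> \<le> expbound ka0 K0 c0 eps"
    and beta_cont: "\<And>eps h. 0 < eps \<Longrightarrow> eps < eps1 \<Longrightarrow> h \<in> Omega N ka0 eps \<Longrightarrow>
        continuous_on {0..1} (beta eps h)"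
    \<comment> \<open>derivatives of beta_N (along the manifold M_mu) are O(exp)\<close>
    and beta_deriv: "\<And>eps xi k x. 0 < eps \<Longrightarrow> eps < eps1 \<Longrightarrow> hxi N hN1 eps xi \<in> Omega N ka0 eps \<Longrightarrow>
        k \<in> {1..N} \<Longrightarrow> x \<in> {0..1} \<Longrightarrow>
        \<exists>D. ((\<lambda>t. beta eps (hxi N hN1 eps (xi(k := t))) x) has_real_derivative D) (at (xi k))
            \<and> \<bar>D\<bar> \<le> expbound ka0 K0 c0 eps"
    \<comment> \<open>u^h(0) = -1 and homogeneous Neumann boundary conditions\<close>
    and bc0: "\<And>eps h. 0 < eps \<Longrightarrow> eps < eps1 \<Longrightarrow> h \<in> Omega N ka0 eps \<Longrightarrow> uh N beta eps h 0 = -1"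
    and bcN: "\<And>eps h. 0 < eps \<Longrightarrow> eps < eps1 \<Longrightarrow> h \<in> Omega N ka0 eps \<Longrightarrow>
        (uh N beta eps h has_real_derivative 0) (at 0 within {0..1}) \<and>
        (uh N beta eps h has_real_derivative 0) (at 1 within {0..1})"
    \<comment> \<open>the map h_{N+1}(xi): u^h in M_mu iff h = (xi, h_{N+1}(xi)) in Omega\<close>
    and hN1_mass: "\<And>eps h. 0 < eps \<Longrightarrow> eps < eps1 \<Longrightarrow>
        (h \<in> Omega N ka0 eps \<and> integral {0..1} (uh N beta eps h) = mu) \<longleftrightarrow>
        (h \<in> Omega N ka0 eps \<and> h (N + 1) = hN1 eps h)"
    and hN1_dep: "\<And>eps xi xi'. (\<forall>i\<in>{1..N}. xi i = xi' i) \<Longrightarrow> hN1 eps xi = hN1 eps xi'"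
    and hN1_deriv: "\<And>eps xi k. 0 < eps \<Longrightarrow> eps < eps1 \<Longrightarrow> hxi N hN1 eps xi \<in> Omega N ka0 eps \<Longrightarrow>
        k \<in> {1..N} \<Longrightarrow>
        \<exists>D. ((\<lambda>t. hN1 eps (xi(k := t))) has_real_derivative D) (at (xi k))
            \<and> \<bar>D - (-1) ^ (N - k)\<bar> \<le> expbound ka0 K0 c0 eps"
  shows "\<exists>K c eps0. 0 < K \<and> 0 < c \<and> 0 < eps0 \<and>
    (\<forall>eps xi. 0 < eps \<and> eps < eps0 \<and> hxi N hN1 eps xi \<in> Omega N ka0 eps \<longrightarrow>
       invertible_mat (Smat N beta hN1 eps xi) \<and>
       (\<forall>T \<in> carrier_mat N N. inverts_mat (Smat N beta hN1 eps xi) T \<longrightarrow>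
          (\<forall>k < N. \<forall>j < N.
             \<bar>T $$ (k, j) - eps / chiX * ((if k = j then 1 else 0)
                 + 1 / (N + 1) * (-1) ^ ((k + 1) + (j + 1) + 1))\<bar>
             \<le> expbound ka0 K c eps)))"
proof -
  interpret constrained_layers N ka0 beta hN1 eps1 K0 c0
    by unfold_locales fact+
  show ?thesis
    by (rule Smat_inverse_asymptotics)
qed

end
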